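(* Let $k^2$ be a constant and consider the system $$u_t+(u^2)_x=\sigma_x,\qquad \sigma_t+u\sigma_x=k^2u_x.$$ For any integer $p$ there is a solution of this system up to $e^{-p}$ in the sense of $\mathbf{R}\langle\varepsilon\rangle$-distributions of the form $$u(t,x,\varepsilon)=u_0+\Delta u\,U\!\left(\frac{x-vt}{\varepsilon}\right),\qquad \sigma(t,x,\varepsilon)=\sigma_0+\Delta\sigma\,\Sigma\!\left(\frac{x-vt}{\varepsilon}\right),$$ where $u_0,\Delta u,\sigma_0,\Delta\sigma,v$ are real, $\Delta u\ne0$, $\Delta\sigma\neq0$, $U(x)=\int_{-\infty}^x\widetilde U(y)\,dy$, $\Sigma(x)=\int_{-\infty}^x\widetilde\Sigma(y)\,dy$ with $\widetilde U,\widetilde\Sigma\in\mathcal{S}(\mathbf{R})$ and $\int\widetilde U=\int\widetilde\Sigma=1$; that is, for every $t\in[0,T]$ and every $\psi\in\mathcal{S}(\mathbf{R})$, $$\int_{-\infty}^{+\infty}\{u_t+2uu_x-\sigma_x\}\psi(x)\,dx=\sum_{k=p}^{\infty}\xi_k\varepsilon^k,\qquad \int_{-\infty}^{+\infty}\{\sigma_t+u\sigma_x-k^2u_x\}\psi(x)\,dx=\sum_{k=p}^{\infty}\eta_k\varepsilon^k$$ in $\mathbf{R}\langle\varepsilon\rangle$. Moreover, $$v=2u_0+\Delta u-\frac{\Delta\sigma}{\Delta u},\qquad (\Delta\sigma)^2-\left(u_0+\tfrac12\Delta u\right)\Delta u\,\Delta\sigma-k^2(\Delta u)^2=0.$$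
   Context: $\mathbf{R}\langle\varepsilon\rangle$ is the field of formal Laurent series $\sum_{n\ge 0}\xi_{n+k}\varepsilon^{n+k}$ ($k\in\mathbf{Z}$, $\xi_i\in\mathbf{R}$) with the non-Archimedean norm $|x|_\nu=e^{-\nu(x)}$, where $\nu(x)$ is the lowest exponent with nonzero coefficient. Integrals depending on $\varepsilon\in(0,1]$ are regarded as elements of $\mathbf{R}\langle\varepsilon\rangle$ via their expansions in powers of $\varepsilon$; "up to $e^{-p}$" means these elements only contain powers $\varepsilon^k$ with $k\ge p$. $T>0$ is a fixed time horizon and $\mathcal{S}(\mathbf{R})$ is the Schwartz space. Here $u$ is the velocity of a medium (of density 1) and $\sigma$ the stress. *)

theory Defs
  imports "HOL-Analysis.Analysis" "HOL-Library.Landau_Symbols"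
begin

definition schwartz :: "(real \<Rightarrow> real) \<Rightarrow> bool" where
  "schwartz f \<longleftrightarrow>
     (\<forall>n x. ((deriv ^^ n) f) differentiable (at x)) \<and>
     (\<forall>m n. \<exists>C. \<forall>x. \<bar>x\<bar> ^ m * \<bar>(deriv ^^ n) f x\<bar> \<le> C)"

text \<open>F (a function of eps in (0,1]) equals the element sum over k >= p of xi_k eps^k
of the Laurent series field, in the sense of its asymptotic expansion in powers
of eps as eps tends to 0+.\<close>
definition expands_as :: "(real \<Rightarrow> real) \<Rightarrow> int \<Rightarrow> (int \<Rightarrow> real) \<Rightarrow> bool" where
  "expands_as F p \<xi> \<longleftrightarrow>
     (\<forall>n::nat. (\<lambda>\<epsilon>. F \<epsilon> - (\<Sum>k\<in>{p..<p + int n}. \<xi> k * \<epsilon> powi k))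
                 \<in> O[at_right 0](\<lambda>\<epsilon>. \<epsilon> powi (p + int n)))"

text \<open>F vanishes up to e^{-p} in R<eps>: its expansion only contains powers eps^k, k >= p.\<close>
definition zero_up_to :: "int \<Rightarrow> (real \<Rightarrow> real) \<Rightarrow> bool" where
  "zero_up_to p F \<longleftrightarrow> (\<exists>\<xi>. expands_as F p \<xi>)"

definition primitive :: "(real \<Rightarrow> real) \<Rightarrow> real \<Rightarrow> real" where
  "primitive F x = (LBINT y:{..x}. F y)"

definition wave :: "real \<Rightarrow> real \<Rightarrow> real \<Rightarrow> (real \<Rightarrow> real) \<Rightarrow> real \<Rightarrow> real \<Rightarrow> real \<Rightarrow> real" where
  "wave c d v F t x \<epsilon> = c + d * primitive F ((x - v * t) / \<epsilon>)"

end

theory Submission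
  imports Defs "HOL-Computational_Algebra.Polynomial"
begin

(*
  Take u0 = 1/2 - k^2, du = dsigma = 1, sigma0 = 0 and v = 1 - 2 k^2, which satisfy both
  algebraic relations, and the kink U = (1 + tanh)/2 with U' = sech^2/2 (kink and kink' below).
  For a stress profile with derivative St both residuals have the self-similar form
  G((x - v t)/eps)/eps, with
    G1 = 2 U U' - St   and   G2 = (k^2 - 1/2) St + U St - k^2 U'.
  Paired with psi and rescaled, a residual becomes the integral of G(y) psi(v t + eps y), whose
  Taylor expansion in eps has the moments of G as coefficients. It therefore suffices to choose
  St so that finitely many moments of G1 and G2 vanish, i.e. to prescribe finitely many moments
  of St and of U St. On the span of the functions x^j q(tanh x) sech^2 x these moment functionals
  are linearly independent: a vanishing combination with polynomial weights P + Q U, tested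
  against (P + Q U) U', gives the integral of (P + Q U)^2 U', and P + Q U = 0 forces P = Q = 0
  because the Wronskian Q' P - Q P' = Q^2 U' would be a decaying polynomial.
*)

section \<open>Integrals over the real line and rapid decay\<close>

lemma lborel_integral_FTC_nonneg:
  fixes f F :: "real \<Rightarrow> real"
  assumes "\<And>x. (F has_real_derivative f x) (at x)" and "\<And>x. isCont f x" and "\<And>x. 0 \<le> f x"
    and "(F \<longlongrightarrow> A) at_bot" and "(F \<longlongrightarrow> B) at_top"
  shows "integrable lborel f" and "integral\<^sup>L lborel f = B - A"
proof -
  have "set_integrable lborel (einterval (-\<infinity>) \<infinity>) f" "(LBINT x=-\<infinity>..\<infinity>. f x) = B - A"
    by (rule interval_integral_FTC_nonneg[where F=F], use assms in \<open>auto simp: ereal_tendsto_simps\<close>)+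
  then show "integrable lborel f" "integral\<^sup>L lborel f = B - A"
    by (simp_all add: set_integrable_def interval_lebesgue_integral_def set_lebesgue_integral_def)
qed

lemma integrable_inverse_1_plus_square_lborel: "integrable lborel (\<lambda>x::real. inverse (1 + x\<^sup>2))"
proof (rule lborel_integral_FTC_nonneg(1)[OF DERIV_arctan _ _ tendsto_arctan_at_bot tendsto_arctan_at_top])
  show "isCont (\<lambda>x::real. inverse (1 + x\<^sup>2)) x" for x
    by (intro continuous_intros) (simp add: add_nonneg_eq_0_iff)
qed simp

lemma continuous_nonneg_integral_eq_0:
  fixes h :: "real \<Rightarrow> real"
  assumes "continuous_on UNIV h" and "integrable lborel h" and "\<And>x. 0 \<le> h x"
    and "(LBINT x. h x) = 0"
  shows "h x = 0"
proof -
  have "AE x in lborel. h x = 0"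
    using assms(2-4) integral_nonneg_eq_0_iff_AE[of lborel h] by simp
  then have "AE x in lebesgue. x \<in> {x. h x = 0}" by (simp add: AE_completion)
  moreover have "closed {x. h x = 0}"
    using assms(1) by (intro closed_Collect_eq) auto
  ultimately show ?thesis using mem_closed_if_AE_lebesgue by blast
qed

definition rapidly_decreasing :: "(real \<Rightarrow> real) \<Rightarrow> bool" where
  "rapidly_decreasing f \<longleftrightarrow> (\<forall>m. \<exists>C. \<forall>x. \<bar>x\<bar> ^ m * \<bar>f x\<bar> \<le> C)"

lemma rapidly_decreasing_add:
  assumes "rapidly_decreasing f" and "rapidly_decreasing g"
  shows "rapidly_decreasing (\<lambda>x. f x + g x)"
  unfolding rapidly_decreasing_def
proof
  fix m
  obtain C D where C: "\<And>x. \<bar>x\<bar> ^ m * \<bar>f x\<bar> \<le> C" and D: "\<And>x. \<bar>x\<bar> ^ m * \<bar>g x\<bar> \<le> D"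
    using assms unfolding rapidly_decreasing_def by metis
  have "\<bar>x\<bar> ^ m * \<bar>f x + g x\<bar> \<le> C + D" for x
  proof -
    have "\<bar>x\<bar> ^ m * \<bar>f x + g x\<bar> \<le> \<bar>x\<bar> ^ m * \<bar>f x\<bar> + \<bar>x\<bar> ^ m * \<bar>g x\<bar>"
      by (simp add: mult_left_mono abs_triangle_ineq flip: distrib_left)
    then show ?thesis using C[of x] D[of x] by linarith
  qed
  then show "\<exists>C. \<forall>x. \<bar>x\<bar> ^ m * \<bar>f x + g x\<bar> \<le> C" by blast
qed

lemma rapidly_decreasing_integrable:
  assumes f: "f \<in> borel_measurable borel" and "rapidly_decreasing f"
  shows "integrable lborel f"
proof -
  obtain C D where C: "\<And>x. \<bar>x\<bar> ^ 0 * \<bar>f x\<bar> \<le> C" and D: "\<And>x. \<bar>x\<bar> ^ 2 * \<bar>f x\<bar> \<le> D"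
    using assms(2) unfolding rapidly_decreasing_def by metis
  have "\<bar>f x\<bar> \<le> (C + D) * inverse (1 + x\<^sup>2)" for x
  proof -
    have "(1 + x\<^sup>2) * \<bar>f x\<bar> \<le> C + D" using C[of x] D[of x] by (simp add: distrib_right)
    then show ?thesis by (simp add: field_simps add_pos_nonneg)
  qed
  then show ?thesis
    using f by (intro Bochner_Integration.integrable_bound[OF
        integrable_mult_left[OF integrable_inverse_1_plus_square_lborel, of "C + D"]])
      (auto intro!: AE_I2 order_trans[OF _ abs_ge_self] simp: mult.commute)
qed

lemma rapidly_decreasing_tendsto_0:
  assumes "rapidly_decreasing f"
  shows "(f \<longlongrightarrow> 0) at_top"
proof -
  obtain C where C: "\<And>x. \<bar>x\<bar> ^ 1 * \<bar>f x\<bar> \<le> C"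
    using assms unfolding rapidly_decreasing_def by metis
  have "\<forall>\<^sub>F x in at_top. norm (f x) \<le> C * inverse x"
  proof (rule eventually_at_top_linorderI[of 1])
    fix x :: real assume "1 \<le> x"
    then show "norm (f x) \<le> C * inverse x" using C[of x] by (simp add: field_simps)
  qed
  moreover have "((\<lambda>x. C * inverse x) \<longlongrightarrow> 0) at_top"
    by (intro tendsto_mult_right_zero tendsto_inverse_0_at_top filterlim_ident)
  ultimately show ?thesis by (rule Lim_null_comparison)
qed

section \<open>The span of the functions x^j q(tanh x) sech^2 x\<close>

definition sech2 :: "real \<Rightarrow> real" where
  "sech2 x = 1 - (tanh x)\<^sup>2"

lemma sech2_eq: "sech2 x = 1 / (cosh x)\<^sup>2"
proof -
  have "cosh x \<noteq> 0" using cosh_real_pos[of x] by simp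
  then have "sech2 x = ((cosh x)\<^sup>2 - (sinh x)\<^sup>2) / (cosh x)\<^sup>2"
    unfolding sech2_def tanh_def by (simp add: field_simps)
  then show ?thesis by (simp add: cosh_square_eq)
qed

lemma sech2_pos: "sech2 x > 0"
  using cosh_real_pos[of x] by (simp add: sech2_eq)

lemma tanh_has_real_derivative: "(tanh has_real_derivative sech2 x) (at x)"
  using has_field_derivative_tanh[OF _ DERIV_ident, of x] cosh_real_pos[of x] by (simp add: sech2_def)

lemma sech2_has_real_derivative: "(sech2 has_real_derivative - 2 * tanh x * sech2 x) (at x)"
proof -
  have "((\<lambda>x. 1 - (tanh x)\<^sup>2) has_real_derivative 0 - 2 * tanh x * sech2 x) (at x)"
    using DERIV_power[OF tanh_has_real_derivative[of x], of 2]
    by (intro DERIV_diff DERIV_const) (simp_all add: mult_ac)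
  then show ?thesis by (simp add: sech2_def[abs_def])
qed

lemma abs_power_le_fact_mult_exp: "\<bar>x::real\<bar> ^ k \<le> fact k * exp \<bar>x\<bar>"
proof -
  have "summable (\<lambda>n. \<bar>x\<bar> ^ n / fact n)"
    using summable_exp[of "\<bar>x\<bar>"] by (simp add: divide_inverse mult.commute)
  then have "(\<Sum>n\<in>{k}. \<bar>x\<bar> ^ n / fact n) \<le> (\<Sum>n. \<bar>x\<bar> ^ n / fact n)"
    by (intro sum_le_suminf) auto
  also have "\<dots> = exp \<bar>x\<bar>" by (simp add: exp_def inverse_eq_divide)
  finally show ?thesis by (simp add: field_simps)
qed

lemma abs_power_mult_sech2_le: "\<bar>x\<bar> ^ k * sech2 x \<le> 2 * fact k"
proof -
  have c1: "1 \<le> cosh x" by (rule cosh_real_ge_1)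
  have "\<bar>x\<bar> ^ k \<le> fact k * exp \<bar>x\<bar>" by (rule abs_power_le_fact_mult_exp)
  also have "\<dots> \<le> fact k * (2 * cosh x)"
    by (intro mult_left_mono) (auto simp: cosh_def abs_if)
  also have "\<dots> \<le> 2 * fact k * cosh x * cosh x"
    using mult_left_mono[OF c1, of "2 * fact k * cosh x"] c1 by simp
  finally show ?thesis using c1 by (simp add: sech2_eq field_simps power2_eq_square)
qed

lemma bounded_poly_tanh: "\<exists>B. \<forall>x::real. \<bar>poly q (tanh x)\<bar> \<le> B"
proof -
  have "compact {-1..1::real}" and "continuous_on {-1..1} (poly q)"
    by (auto intro: continuous_intros)
  from continuous_on_compact_bound[OF this]
  obtain B where "\<And>t. t \<in> {-1..1} \<Longrightarrow> norm (poly q t) \<le> B" by blast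
  moreover have "tanh x \<in> {-1..1}" for x :: real
    using tanh_real_bounds[of x] by auto
  ultimately show ?thesis by auto
qed

inductive sech2_span :: "(real \<Rightarrow> real) \<Rightarrow> bool" where
  monomial: "sech2_span (\<lambda>x. x ^ j * poly q (tanh x) * sech2 x)"
| add: "sech2_span f \<Longrightarrow> sech2_span g \<Longrightarrow> sech2_span (\<lambda>x. f x + g x)"

lemma sech2_span_mult_monomial:
  assumes "sech2_span f"
  shows "sech2_span (\<lambda>x. x ^ i * poly p (tanh x) * f x)"
  using assms
proof induction
  case (monomial j q)
  have "sech2_span (\<lambda>x. x ^ (i + j) * poly (p * q) (tanh x) * sech2 x)"
    by (rule sech2_span.monomial)
  then show ?case by (simp add: power_add mult_ac)
next
  case (add f g)
  then show ?case using sech2_span.add[OF add.IH] by (simp add: distrib_left)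
qed

lemma sech2_span_zero: "sech2_span (\<lambda>x. 0)"
  using sech2_span.monomial[of 0 0] by simp

lemma sech2_span_cmult: "sech2_span f \<Longrightarrow> sech2_span (\<lambda>x. c * f x)"
  using sech2_span_mult_monomial[of f 0 "[:c:]"] by simp

lemma sech2_span_mult_power: "sech2_span f \<Longrightarrow> sech2_span (\<lambda>x. x ^ n * f x)"
  using sech2_span_mult_monomial[of f n 1] by simp

lemma sech2_span_diff: "sech2_span f \<Longrightarrow> sech2_span g \<Longrightarrow> sech2_span (\<lambda>x. f x - g x)"
  using sech2_span.add[OF _ sech2_span_cmult[of g "-1"]] by simp

lemma sech2_span_sum: "(\<And>i. i \<in> A \<Longrightarrow> sech2_span (f i)) \<Longrightarrow> sech2_span (\<lambda>x. \<Sum>i\<in>A. f i x)"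
  by (induction A rule: infinite_finite_induct) (auto intro: sech2_span_zero sech2_span.add)

lemma sech2_span_mult_poly:
  fixes p :: "real poly"
  assumes "sech2_span f"
  shows "sech2_span (\<lambda>x. poly p x * f x)"
proof -
  have "sech2_span (\<lambda>x. \<Sum>i\<le>degree p. coeff p i * (x ^ i * f x))"
    by (intro sech2_span_sum sech2_span_cmult sech2_span_mult_power assms)
  then show ?thesis by (simp add: poly_altdef sum_distrib_left mult_ac)
qed

lemma sech2_span_has_derivative:
  "sech2_span f \<Longrightarrow> \<exists>g. sech2_span g \<and> (\<forall>x. (f has_real_derivative g x) (at x))"
proof (induction rule: sech2_span.induct)
  case (monomial j q)
  have "((\<lambda>x. x ^ j * poly q (tanh x) * sech2 x) has_real_derivative
      x ^ (j - Suc 0) * poly (smult (real j) q) (tanh x) * sech2 x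
      + x ^ j * poly (pderiv q * [:1, 0, -1:] - [:0, 2:] * q) (tanh x) * sech2 x) (at x)" for x
  proof -
    have "((\<lambda>x. poly q (tanh x)) has_real_derivative poly (pderiv q) (tanh x) * sech2 x) (at x)"
      by (rule DERIV_chain2[OF poly_DERIV tanh_has_real_derivative])
    from DERIV_mult[OF DERIV_mult[OF DERIV_pow this] sech2_has_real_derivative]
    show ?thesis by (rule DERIV_cong) (simp add: sech2_def algebra_simps power2_eq_square)
  qed
  then show ?case using sech2_span.add[OF sech2_span.monomial sech2_span.monomial] by blast
next
  case (add f g)
  then obtain f' g' where "sech2_span f'" "sech2_span g'"
    and "\<forall>x. (f has_real_derivative f' x) (at x)" "\<forall>x. (g has_real_derivative g' x) (at x)"
    by blast
  then show ?case by (auto intro!: exI[of _ "\<lambda>x. f' x + g' x"] sech2_span.add DERIV_add)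
qed

lemma
  assumes "sech2_span f"
  shows sech2_span_deriv: "sech2_span (deriv f)"
    and sech2_span_has_deriv: "(f has_real_derivative deriv f x) (at x)"
proof -
  obtain g where "sech2_span g" and g: "\<And>x. (f has_real_derivative g x) (at x)"
    using sech2_span_has_derivative[OF assms] by blast
  moreover have "deriv f = g" using g by (auto intro!: ext DERIV_imp_deriv)
  ultimately show "sech2_span (deriv f)" "(f has_real_derivative deriv f x) (at x)" by simp_all
qed

lemma sech2_span_higher_deriv: "sech2_span f \<Longrightarrow> sech2_span ((deriv ^^ n) f)"
  by (induction n) (auto intro: sech2_span_deriv)

lemma sech2_span_continuous: "sech2_span f \<Longrightarrow> continuous_on UNIV f"
  by (blast intro: continuous_at_imp_continuous_on DERIV_isCont sech2_span_has_deriv)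

lemma sech2_span_rapidly_decreasing: "sech2_span f \<Longrightarrow> rapidly_decreasing f"
proof (induction rule: sech2_span.induct)
  case (monomial j q)
  obtain B where B: "\<And>x. \<bar>poly q (tanh x)\<bar> \<le> B" using bounded_poly_tanh by blast
  have "\<bar>x\<bar> ^ m * \<bar>x ^ j * poly q (tanh x) * sech2 x\<bar> \<le> B * (2 * fact (m + j))" for m x
  proof -
    have "\<bar>x\<bar> ^ m * \<bar>x ^ j * poly q (tanh x) * sech2 x\<bar>
        = \<bar>poly q (tanh x)\<bar> * (\<bar>x\<bar> ^ (m + j) * sech2 x)"
      using sech2_pos[of x] by (simp add: abs_mult power_abs power_add mult_ac)
    also have "\<dots> \<le> B * (2 * fact (m + j))"
      by (rule mult_mono[OF B abs_power_mult_sech2_le]) (use B[of x] sech2_pos[of x] in auto)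
    finally show ?thesis .
  qed
  then show ?case unfolding rapidly_decreasing_def by blast
next
  case (add f g)
  from add.IH show ?case by (rule rapidly_decreasing_add)
qed

lemma sech2_span_integrable: "sech2_span f \<Longrightarrow> integrable lborel f"
  by (intro rapidly_decreasing_integrable sech2_span_rapidly_decreasing
      borel_measurable_continuous_onI sech2_span_continuous)

lemma sech2_span_integrable_moment: "sech2_span f \<Longrightarrow> integrable lborel (\<lambda>x. x ^ j * f x)"
  by (intro sech2_span_integrable sech2_span_mult_power)

lemma sech2_span_schwartz:
  assumes "sech2_span f"
  shows "schwartz f"
  unfolding schwartz_def
proof (intro conjI allI)
  fix n x
  show "(deriv ^^ n) f differentiable (at x)"
    using sech2_span_has_deriv[OF sech2_span_higher_deriv[OF assms]]
    unfolding real_differentiable_def by blast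
next
  fix m n
  show "\<exists>C. \<forall>x. \<bar>x\<bar> ^ m * \<bar>(deriv ^^ n) f x\<bar> \<le> C"
    using sech2_span_rapidly_decreasing[OF sech2_span_higher_deriv[OF assms]]
    unfolding rapidly_decreasing_def by blast
qed

section \<open>Primitives and the kink profile\<close>

lemma primitive_eq_interval_integral:
  assumes [measurable]: "f \<in> borel_measurable borel"
  shows "primitive f y = (LBINT z=-\<infinity>..ereal y. f z)"
proof -
  have "(LBINT z:{..y}. f z) = (LBINT z:{..<y}. f z)"
  proof (rule set_integral_cong_set)
    show "set_borel_measurable lborel {..<y} f" "set_borel_measurable lborel {..y} f"
      unfolding set_borel_measurable_def by measurable
    show "AE z in lborel. (z \<in> {..<y}) = (z \<in> {..y})"
      by (rule AE_mp[OF AE_lborel_singleton[of y]]) (auto intro!: AE_I2)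
  qed
  then show ?thesis by (simp add: primitive_def interval_lebesgue_integral_def)
qed

lemma primitive_eq_antiderivative:
  fixes f F :: "real \<Rightarrow> real"
  assumes F: "\<And>x. (F has_real_derivative f x) (at x)" and f: "\<And>x. isCont f x"
    and "\<And>x. 0 \<le> f x" and "(F \<longlongrightarrow> 0) at_bot"
  shows "primitive f x = F x"
proof -
  have "((F \<circ> real_of_ereal) \<longlongrightarrow> 0) (at_right (-\<infinity>))"
    using assms(4) by (simp add: ereal_tendsto_simps)
  moreover have "((F \<circ> real_of_ereal) \<longlongrightarrow> F x) (at_left (ereal x))"
    using DERIV_isCont[OF F, of x] by (simp add: ereal_tendsto_simps isCont_def filterlim_at_split)
  ultimately have "(LBINT y=-\<infinity>..ereal x. f y) = F x - 0"
    by (intro interval_integral_FTC_nonneg(2)[where F=F]) (auto intro: F f assms(3))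
  moreover have "f \<in> borel_measurable borel"
    using f by (intro borel_measurable_continuous_onI continuous_at_imp_continuous_on) auto
  ultimately show ?thesis by (simp add: primitive_eq_interval_integral)
qed

lemma primitive_has_real_derivative:
  assumes cont: "continuous_on UNIV f" and int: "integrable lborel f"
  shows "(primitive f has_real_derivative f y) (at y)"
proof -
  have "set_integrable lborel (einterval a b) f" for a b
    using integrable_mult_indicator[OF _ int] by (simp add: set_integrable_def)
  then have "interval_lebesgue_integrable lborel a b f" for a b
    by (simp add: interval_lebesgue_integrable_def)
  then have split: "primitive f = (\<lambda>u. (LBINT z=-\<infinity>..ereal 0. f z) + (LBINT z=ereal 0..ereal u. f z))"
    using borel_measurable_continuous_onI[OF cont]
    by (simp add: fun_eq_iff primitive_eq_interval_integral interval_integral_sum)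
  define a b where "a = - \<bar>y\<bar> - 1" and "b = \<bar>y\<bar> + 1"
  have "((\<lambda>u. LBINT z=ereal 0..ereal u. f z) has_vector_derivative f y) (at y within {a..b})"
    by (rule interval_integral_FTC2) (auto simp: a_def b_def intro: continuous_on_subset[OF cont])
  then have "((\<lambda>u. LBINT z=ereal 0..ereal u. f z) has_vector_derivative f y) (at y within {a<..<b})"
    by (rule has_vector_derivative_within_subset) auto
  then have "((\<lambda>u. LBINT z=ereal 0..ereal u. f z) has_real_derivative f y) (at y)"
    by (subst (asm) has_vector_derivative_within_open)
       (auto simp: a_def b_def has_real_derivative_iff_has_vector_derivative)
  from DERIV_add[OF DERIV_const this] show ?thesis
    unfolding split by simp
qed

definition kink :: "real \<Rightarrow> real" where
  "kink x = (1 + tanh x) / 2"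

definition kink' :: "real \<Rightarrow> real" where
  "kink' x = sech2 x / 2"

lemma kink_has_real_derivative: "(kink has_real_derivative kink' x) (at x)"
  unfolding kink_def[abs_def] kink'_def
  by (auto intro!: derivative_eq_intros tanh_has_real_derivative simp: sech2_def)

lemma kink'_pos: "kink' x > 0"
  using sech2_pos[of x] by (simp add: kink'_def)

lemma kink_tendsto_at_bot: "(kink \<longlongrightarrow> 0) at_bot"
proof -
  have "((\<lambda>x. (1 + tanh x) / 2) \<longlongrightarrow> (1 + (-1)) / (2::real)) at_bot"
    by (intro tendsto_intros tanh_real_at_bot) simp
  then show ?thesis by (simp add: kink_def[abs_def])
qed

lemma kink_tendsto_at_top: "(kink \<longlongrightarrow> 1) at_top"
proof -
  have "((\<lambda>x. (1 + tanh x) / 2) \<longlongrightarrow> (1 + 1) / (2::real)) at_top"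
    by (intro tendsto_intros tanh_real_at_top) simp
  then show ?thesis by (simp add: kink_def[abs_def])
qed

lemma sech2_span_kink': "sech2_span kink'"
  using sech2_span.monomial[of 0 "[:1/2:]"] by (simp add: kink'_def[abs_def])

lemma sech2_span_mult_kink:
  assumes "sech2_span f"
  shows "sech2_span (\<lambda>x. kink x * f x)"
proof -
  have "kink x = poly [:1/2, 1/2:] (tanh x)" for x by (simp add: kink_def)
  then show ?thesis using sech2_span_mult_monomial[OF assms, of 0 "[:1/2, 1/2:]"] by simp
qed

lemma sech2_span_kink_kink': "sech2_span (\<lambda>x. 2 * kink x * kink' x)"
  using sech2_span_cmult[OF sech2_span_mult_kink[OF sech2_span_kink'], of 2] by (simp add: mult.assoc)

lemma primitive_kink': "primitive kink' x = kink x"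
  using kink'_pos sech2_span_continuous[OF sech2_span_kink']
  by (intro primitive_eq_antiderivative kink_has_real_derivative kink_tendsto_at_bot)
     (auto simp: less_imp_le continuous_on_eq_continuous_at)

lemma integral_kink': "(LBINT x. kink' x) = 1"
  using kink'_pos sech2_span_continuous[OF sech2_span_kink']
    lborel_integral_FTC_nonneg(2)[OF kink_has_real_derivative _ _ kink_tendsto_at_bot kink_tendsto_at_top]
  by (simp add: less_imp_le continuous_on_eq_continuous_at)

lemma integral_kink_kink': "(LBINT x. 2 * kink x * kink' x) = 1"
proof -
  have "((\<lambda>x. (kink x)\<^sup>2) has_real_derivative 2 * kink x * kink' x) (at x)" for x
    by (auto intro!: derivative_eq_intros kink_has_real_derivative)
  moreover have "isCont (\<lambda>x. 2 * kink x * kink' x) x" for x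
    using sech2_span_continuous[OF sech2_span_kink_kink'] by (simp add: continuous_on_eq_continuous_at)
  moreover have "0 \<le> 2 * kink x * kink' x" for x
    using kink'_pos[of x] tanh_real_bounds[of x] by (simp add: kink_def)
  ultimately have "(LBINT x. 2 * kink x * kink' x) = 1\<^sup>2 - 0\<^sup>2"
    using tendsto_power[OF kink_tendsto_at_bot] tendsto_power[OF kink_tendsto_at_top]
    by (rule lborel_integral_FTC_nonneg(2))
  then show ?thesis by simp
qed

section \<open>Prescribing finitely many independent linear functionals\<close>

locale linear_functionals =
  fixes V :: "('a \<Rightarrow> real) set" and \<phi> :: "'i \<Rightarrow> ('a \<Rightarrow> real) \<Rightarrow> real"
  assumes zero_in: "(\<lambda>x. 0) \<in> V"
    and lincomb_in: "\<And>f g a b. f \<in> V \<Longrightarrow> g \<in> V \<Longrightarrow> (\<lambda>x. a * f x + b * g x) \<in> V"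
    and linear: "\<And>i f g a b. f \<in> V \<Longrightarrow> g \<in> V \<Longrightarrow>
      \<phi> i (\<lambda>x. a * f x + b * g x) = a * \<phi> i f + b * \<phi> i g"
begin

lemma sum_in:
  assumes "finite J" and "\<And>j. j \<in> J \<Longrightarrow> e j \<in> V"
  shows "(\<lambda>x. \<Sum>j\<in>J. a j * e j x) \<in> V"
  using assms
proof (induction J rule: finite_induct)
  case empty
  then show ?case using zero_in by simp
next
  case (insert j J)
  then show ?case using lincomb_in[of "e j" "\<lambda>x. \<Sum>j\<in>J. a j * e j x" "a j" 1] by simp
qed

lemma linear_sum:
  assumes "finite J" and "\<And>j. j \<in> J \<Longrightarrow> e j \<in> V"
  shows "\<phi> i (\<lambda>x. \<Sum>j\<in>J. a j * e j x) = (\<Sum>j\<in>J. a j * \<phi> i (e j))"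
  using assms
proof (induction J rule: finite_induct)
  case empty
  then show ?case using linear[OF zero_in zero_in, of i 0 0] by simp
next
  case (insert j J)
  then show ?case using linear[OF _ sum_in[of J e a], of "e j" i "a j" 1] by simp
qed

lemma combination_if_vanishes_on_kernel:
  assumes "finite I" and onto: "\<And>z. \<exists>f\<in>V. \<forall>i\<in>I. \<phi> i f = z i"
    and kernel: "\<And>f. f \<in> V \<Longrightarrow> \<forall>i\<in>I. \<phi> i f = 0 \<Longrightarrow> \<phi> a f = 0"
  shows "\<exists>c. \<forall>f\<in>V. \<phi> a f = (\<Sum>i\<in>I. \<phi> i f * c i)"
proof -
  have "\<forall>j\<in>I. \<exists>g\<in>V. \<forall>i\<in>I. \<phi> i g = (if i = j then 1 else 0)" by (intro ballI onto)
  then obtain e where eV: "\<And>j. j \<in> I \<Longrightarrow> e j \<in> V"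
    and e: "\<And>i j. i \<in> I \<Longrightarrow> j \<in> I \<Longrightarrow> \<phi> i (e j) = (if i = j then 1 else 0)"
    by metis
  have "\<phi> a f = (\<Sum>j\<in>I. \<phi> j f * \<phi> a (e j))" if f: "f \<in> V" for f
  proof -
    define h where "h = (\<lambda>x. 1 * f x + (-1) * (\<Sum>j\<in>I. \<phi> j f * e j x))"
    have hV: "h \<in> V"
      unfolding h_def using assms(1) f eV by (intro lincomb_in sum_in) auto
    have "\<phi> i h = 1 * \<phi> i f + (-1) * \<phi> i (\<lambda>x. \<Sum>j\<in>I. \<phi> j f * e j x)" for i
      unfolding h_def using assms(1) eV by (intro linear f sum_in)
    then have \<phi>_h: "\<phi> i h = \<phi> i f - (\<Sum>j\<in>I. \<phi> j f * \<phi> i (e j))" for i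
      using assms(1) eV by (simp add: linear_sum)
    have dual: "(\<Sum>j\<in>I. \<phi> j f * \<phi> i (e j)) = \<phi> i f" if "i \<in> I" for i
    proof -
      have "(\<Sum>j\<in>I. \<phi> j f * \<phi> i (e j)) = (\<Sum>j\<in>I. if j = i then \<phi> j f else 0)"
        using that by (intro sum.cong) (auto simp: e)
      then show ?thesis using that assms(1) by simp
    qed
    have "\<phi> i h = 0" if "i \<in> I" for i
      using \<phi>_h[of i] dual[OF that] by simp
    then have "\<phi> a h = 0" using kernel[OF hV] by blast
    then show ?thesis using \<phi>_h[of a] by simp
  qed
  then show ?thesis by (intro exI[of _ "\<lambda>j. \<phi> a (e j)"]) blast
qed

lemma independent_if_insert_independent:
  assumes "finite I" and "a \<notin> I"
    and indep: "\<And>c. \<forall>f\<in>V. (\<Sum>i\<in>insert a I. c i * \<phi> i f) = 0 \<Longrightarrow> \<forall>i\<in>insert a I. c i = 0"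
    and c: "\<forall>f\<in>V. (\<Sum>i\<in>I. c i * \<phi> i f) = 0"
  shows "\<forall>i\<in>I. c i = 0"
proof -
  define c' where "c' i = (if i = a then 0 else c i)" for i
  have "(\<Sum>i\<in>I. c' i * \<phi> i f) = (\<Sum>i\<in>I. c i * \<phi> i f)" for f
    using \<open>a \<notin> I\<close> by (intro sum.cong) (auto simp: c'_def)
  then have "\<forall>i\<in>insert a I. c' i = 0"
    using c assms(1,2) by (intro indep) (simp add: c'_def)
  then show ?thesis using \<open>a \<notin> I\<close> by (auto simp: c'_def split: if_splits)
qed

lemma onto_if_independent:
  assumes "finite I" and "\<And>c. \<forall>f\<in>V. (\<Sum>i\<in>I. c i * \<phi> i f) = 0 \<Longrightarrow> \<forall>i\<in>I. c i = 0"
  shows "\<exists>f\<in>V. \<forall>i\<in>I. \<phi> i f = y i"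
  using assms
proof (induction I arbitrary: y rule: finite_induct)
  case empty
  then show ?case using zero_in by blast
next
  case (insert a I)
  have onto: "\<exists>f\<in>V. \<forall>i\<in>I. \<phi> i f = z i" for z
    using insert.IH independent_if_insert_independent[OF insert.hyps insert.prems] by blast
  have "\<exists>f0\<in>V. (\<forall>i\<in>I. \<phi> i f0 = 0) \<and> \<phi> a f0 \<noteq> 0"
  proof (rule ccontr)
    assume "\<not> ?thesis"
    then obtain c where c: "\<And>f. f \<in> V \<Longrightarrow> \<phi> a f = (\<Sum>i\<in>I. \<phi> i f * c i)"
      using combination_if_vanishes_on_kernel[OF insert.hyps(1) onto] by blast
    define c' where "c' i = (if i = a then 1 else - c i)" for i
    have "(\<Sum>i\<in>insert a I. c' i * \<phi> i f) = 0" if "f \<in> V" for f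
    proof -
      have "(\<Sum>i\<in>I. c' i * \<phi> i f) = (\<Sum>i\<in>I. - (\<phi> i f * c i))"
        using insert.hyps by (intro sum.cong) (auto simp: c'_def)
      then have "(\<Sum>i\<in>I. c' i * \<phi> i f) = - (\<Sum>i\<in>I. \<phi> i f * c i)"
        by (simp add: sum_negf)
      then show ?thesis using insert.hyps c[OF that] by (simp add: c'_def)
    qed
    then have "c' a = 0" using insert.prems by blast
    then show False by (simp add: c'_def)
  qed
  then obtain f0 where f0: "f0 \<in> V" "\<And>i. i \<in> I \<Longrightarrow> \<phi> i f0 = 0" "\<phi> a f0 \<noteq> 0" by blast
  obtain f where f: "f \<in> V" "\<And>i. i \<in> I \<Longrightarrow> \<phi> i f = y i" using onto by blast
  define t where "t = (y a - \<phi> a f) / \<phi> a f0"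
  have "\<phi> i (\<lambda>x. 1 * f x + t * f0 x) = \<phi> i f + t * \<phi> i f0" for i
    using linear[OF f(1) f0(1), of i 1 t] by simp
  then have "\<forall>i\<in>insert a I. \<phi> i (\<lambda>x. 1 * f x + t * f0 x) = y i"
    using f f0 by (auto simp: t_def)
  moreover have "(\<lambda>x. 1 * f x + t * f0 x) \<in> V" using f f0 by (intro lincomb_in)
  ultimately show ?case by blast
qed

end

section \<open>Independence of the moments against x^j and x^j kink x\<close>

lemma poly_eq_0_if_tendsto_0:
  fixes p :: "real poly"
  assumes lim: "(poly p \<longlongrightarrow> 0) at_top"
  shows "p = 0"
proof (cases "degree p = 0")
  case True
  then obtain c where p: "p = [:c:]" by (rule degree_eq_zeroE)
  moreover have "poly p = (\<lambda>x. c)" using p by (simp add: fun_eq_iff)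
  ultimately have "((\<lambda>x::real. c) \<longlongrightarrow> 0) at_top" using lim by simp
  then show ?thesis using p by (simp add: tendsto_const_iff)
next
  case False
  then have "filterlim (poly p) at_infinity at_top"
    by (intro filterlim_compose[OF filterlim_poly_at_infinity filterlim_at_top_imp_at_infinity]
        filterlim_ident) simp
  then show ?thesis using not_tendsto_and_filterlim_at_infinity[OF _ lim] by simp
qed

lemma poly_kink_eq_0:
  fixes P Q :: "real poly"
  assumes PQ: "\<And>x. poly P x + poly Q x * kink x = 0"
  shows "P = 0" and "Q = 0"
proof -
  have "((\<lambda>x. poly P x + poly Q x * kink x) has_real_derivative
      poly (pderiv P) x + poly (pderiv Q) x * kink x + poly Q x * kink' x) (at x)" for x
    by (auto intro!: derivative_eq_intros poly_DERIV kink_has_real_derivative)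
  then have PQ': "poly (pderiv P) x + poly (pderiv Q) x * kink x + poly Q x * kink' x = 0" for x
    using PQ DERIV_unique[OF _ DERIV_const] by (metis (no_types, lifting) ext)
  define W where "W = pderiv Q * P - Q * pderiv P"
  have W: "poly W x = poly (Q ^ 2) x * kink' x" for x
  proof -
    have P: "poly P x = - (poly Q x * kink x)"
      and P': "poly (pderiv P) x = - (poly (pderiv Q) x * kink x + poly Q x * kink' x)"
      using PQ[of x] PQ'[of x] by (simp_all add: eq_neg_iff_add_eq_0 add.assoc)
    have "poly W x = poly (pderiv Q) x * poly P x - poly Q x * poly (pderiv P) x"
      by (simp add: W_def)
    also have "\<dots> = poly (Q ^ 2) x * kink' x"
      unfolding P P' by (simp add: power2_eq_square algebra_simps)
    finally show ?thesis .
  qed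
  have "((\<lambda>x. poly (Q ^ 2) x * kink' x) \<longlongrightarrow> 0) at_top"
    by (intro rapidly_decreasing_tendsto_0 sech2_span_rapidly_decreasing
        sech2_span_mult_poly sech2_span_kink')
  then have "W = 0" by (intro poly_eq_0_if_tendsto_0) (simp add: W[abs_def])
  then have "poly Q x = 0" for x using W[of x] kink'_pos[of x] by simp
  then show "Q = 0" using poly_all_0_iff_0 by blast
  then have "poly P x = 0" for x using PQ[of x] by simp
  then show "P = 0" using poly_all_0_iff_0 by blast
qed

fun kink_basis :: "nat + nat \<Rightarrow> real \<Rightarrow> real" where
  "kink_basis (Inl j) x = x ^ j"
| "kink_basis (Inr j) x = x ^ j * kink x"

lemma sech2_span_mult_kink_basis: "sech2_span f \<Longrightarrow> sech2_span (\<lambda>x. kink_basis i x * f x)"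
  by (cases i) (auto simp: mult.assoc intro: sech2_span_mult_power sech2_span_mult_kink)

lemma kink_basis_independent:
  assumes "\<And>x. (\<Sum>i\<in>{..<N} <+> {..<N}. c i * kink_basis i x) = 0"
  shows "\<forall>i\<in>{..<N} <+> {..<N}. c i = 0"
proof -
  define P Q where "P = (\<Sum>j<N. monom (c (Inl j)) j)" and "Q = (\<Sum>j<N. monom (c (Inr j)) j)"
  have "poly P x + poly Q x * kink x = 0" for x
    using assms[of x] by (simp add: P_def Q_def sum.Plus poly_sum poly_monom sum_distrib_left mult_ac)
  then have "P = 0" and "Q = 0" by (rule poly_kink_eq_0)+
  moreover have "coeff P j = c (Inl j)" and "coeff Q j = c (Inr j)" if "j < N" for j
    using that by (simp_all add: P_def Q_def coeff_sum coeff_monom)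
  ultimately show ?thesis by auto
qed

interpretation kink_moments: linear_functionals "Collect sech2_span" "\<lambda>i f. LBINT x. kink_basis i x * f x"
proof
  show "(\<lambda>x. 0) \<in> Collect sech2_span" by (simp add: sech2_span_zero)
  fix f g :: "real \<Rightarrow> real" and a b :: real and i
  assume "f \<in> Collect sech2_span" and "g \<in> Collect sech2_span"
  then have f: "sech2_span f" and g: "sech2_span g" by simp_all
  show "(\<lambda>x. a * f x + b * g x) \<in> Collect sech2_span"
    using f g by (simp add: sech2_span.add sech2_span_cmult)
  have "(LBINT x. kink_basis i x * (a * f x + b * g x))
      = (LBINT x. a * (kink_basis i x * f x) + b * (kink_basis i x * g x))"
    by (simp add: algebra_simps)
  also have "\<dots> = a * (LBINT x. kink_basis i x * f x) + b * (LBINT x. kink_basis i x * g x)"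
    using sech2_span_integrable[OF sech2_span_mult_kink_basis[OF f], of i]
      sech2_span_integrable[OF sech2_span_mult_kink_basis[OF g], of i]
    by simp
  finally show "(LBINT x. kink_basis i x * (a * f x + b * g x))
      = a * (LBINT x. kink_basis i x * f x) + b * (LBINT x. kink_basis i x * g x)" .
qed

lemma kink_moments_independent:
  assumes "\<forall>f\<in>Collect sech2_span. (\<Sum>i\<in>{..<N} <+> {..<N}. c i * (LBINT x. kink_basis i x * f x)) = 0"
  shows "\<forall>i\<in>{..<N} <+> {..<N}. c i = 0"
proof (rule kink_basis_independent)
  fix x
  define g where "g x = (\<Sum>i\<in>{..<N} <+> {..<N}. c i * kink_basis i x)" for x
  have g_mult: "sech2_span (\<lambda>x. g x * f x)" if "sech2_span f" for f
    unfolding g_def sum_distrib_right mult.assoc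
    by (intro sech2_span_sum sech2_span_cmult sech2_span_mult_kink_basis that)
  have g_integral: "(LBINT x. g x * h x)
      = (\<Sum>i\<in>{..<N} <+> {..<N}. c i * (LBINT x. kink_basis i x * h x))" if "sech2_span h" for h
  proof -
    have "(LBINT x. g x * h x) = (LBINT x. \<Sum>i\<in>{..<N} <+> {..<N}. c i * (kink_basis i x * h x))"
      by (simp add: g_def sum_distrib_right mult.assoc)
    also have "\<dots> = (\<Sum>i\<in>{..<N} <+> {..<N}. (LBINT x. c i * (kink_basis i x * h x)))"
      by (intro Bochner_Integration.integral_sum sech2_span_integrable sech2_span_cmult
          sech2_span_mult_kink_basis that)
    finally show ?thesis by simp
  qed
  have "(LBINT x. g x * (g x * kink' x))
      = (\<Sum>i\<in>{..<N} <+> {..<N}. c i * (LBINT x. kink_basis i x * (g x * kink' x)))"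
    by (intro g_integral g_mult sech2_span_kink')
  also have "\<dots> = 0" using assms g_mult[OF sech2_span_kink'] by simp
  finally have "(LBINT x. (g x)\<^sup>2 * kink' x) = 0" by (simp add: power2_eq_square mult.assoc)
  moreover have "sech2_span (\<lambda>x. (g x)\<^sup>2 * kink' x)"
    using g_mult[OF g_mult[OF sech2_span_kink']] by (simp add: power2_eq_square mult.assoc)
  ultimately have "(g x)\<^sup>2 * kink' x = 0"
    using kink'_pos by (intro continuous_nonneg_integral_eq_0[where h = "\<lambda>x. (g x)\<^sup>2 * kink' x"]
        sech2_span_continuous sech2_span_integrable) (auto simp: less_imp_le)
  then show "(\<Sum>i\<in>{..<N} <+> {..<N}. c i * kink_basis i x) = 0"
    using kink'_pos[of x] by (simp add: g_def)
qed

lemma exists_stress_profile: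
  assumes a: "sech2_span a" and b: "sech2_span b"
  shows "\<exists>St. sech2_span St \<and>
    (\<forall>j<N. (LBINT x. x ^ j * (a x - St x)) = 0) \<and>
    (\<forall>j<N. (LBINT x. x ^ j * (\<kappa> * St x + kink x * St x - b x)) = 0)"
proof -
  define y where "y = case_sum (\<lambda>j. LBINT x. x ^ j * a x)
    (\<lambda>j. (LBINT x. x ^ j * b x) - \<kappa> * (LBINT x. x ^ j * a x))"
  obtain St where St: "sech2_span St"
    and moments: "\<And>i. i \<in> {..<N} <+> {..<N} \<Longrightarrow> (LBINT x. kink_basis i x * St x) = y i"
    using kink_moments.onto_if_independent[of "{..<N} <+> {..<N}" y] kink_moments_independent
    by auto
  have "(LBINT x. x ^ j * (a x - St x)) = 0"
    and "(LBINT x. x ^ j * (\<kappa> * St x + kink x * St x - b x)) = 0" if "j < N" for j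
  proof -
    have m1: "(LBINT x. x ^ j * St x) = (LBINT x. x ^ j * a x)"
      using moments[OF InlI] that by (simp add: y_def)
    have m2: "(LBINT x. x ^ j * (kink x * St x)) = (LBINT x. x ^ j * b x) - \<kappa> * (LBINT x. x ^ j * a x)"
      using moments[OF InrI] that by (simp add: y_def mult.assoc)
    note int = sech2_span_integrable_moment[OF a] sech2_span_integrable_moment[OF b]
      sech2_span_integrable_moment[OF St] sech2_span_integrable_moment[OF sech2_span_mult_kink[OF St]]
    have "(LBINT x. x ^ j * (a x - St x)) = (LBINT x. x ^ j * a x) - (LBINT x. x ^ j * St x)"
      unfolding right_diff_distrib using int by (intro Bochner_Integration.integral_diff)
    then show "(LBINT x. x ^ j * (a x - St x)) = 0" by (simp add: m1)
    have "(\<lambda>x. x ^ j * (\<kappa> * St x + kink x * St x - b x))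
        = (\<lambda>x. (\<kappa> * (x ^ j * St x) + x ^ j * (kink x * St x)) - x ^ j * b x)"
      by (simp add: fun_eq_iff algebra_simps)
    then have "(LBINT x. x ^ j * (\<kappa> * St x + kink x * St x - b x))
        = (LBINT x. \<kappa> * (x ^ j * St x) + x ^ j * (kink x * St x)) - (LBINT x. x ^ j * b x)"
      using int by (simp add: Bochner_Integration.integral_diff)
    also have "\<dots> = \<kappa> * (LBINT x. x ^ j * St x) + (LBINT x. x ^ j * (kink x * St x))
        - (LBINT x. x ^ j * b x)"
      using int by simp
    finally show "(LBINT x. x ^ j * (\<kappa> * St x + kink x * St x - b x)) = 0"
      by (simp add: m1 m2)
  qed
  then show ?thesis using St by blast
qed

section \<open>Asymptotic expansion of rescaled pairings\<close>

lemma schwartz_has_real_derivative: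
  "schwartz \<psi> \<Longrightarrow> ((deriv ^^ m) \<psi> has_real_derivative (deriv ^^ Suc m) \<psi> x) (at x)"
  unfolding schwartz_def by (simp add: DERIV_deriv_iff_real_differentiable)

lemma schwartz_bounded_deriv: "schwartz \<psi> \<Longrightarrow> \<exists>B. \<forall>x. \<bar>(deriv ^^ n) \<psi> x\<bar> \<le> B"
  unfolding schwartz_def by (metis mult_1 power_0)

lemma schwartz_continuous: "schwartz \<psi> \<Longrightarrow> continuous_on UNIV \<psi>"
  using schwartz_has_real_derivative[of \<psi> 0]
  by (auto intro!: continuous_at_imp_continuous_on DERIV_isCont)

lemma schwartz_taylor_remainder:
  assumes "schwartz \<psi>"
  shows "\<exists>B. \<forall>a h. \<bar>\<psi> (a + h) - (\<Sum>m<n. (deriv ^^ m) \<psi> a / fact m * h ^ m)\<bar> \<le> B * \<bar>h\<bar> ^ n"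
proof -
  obtain B where B: "\<And>x. \<bar>(deriv ^^ n) \<psi> x\<bar> \<le> B"
    using schwartz_bounded_deriv[OF assms] by blast
  have "\<bar>\<psi> (a + h) - (\<Sum>m<n. (deriv ^^ m) \<psi> a / fact m * h ^ m)\<bar> \<le> B / fact n * \<bar>h\<bar> ^ n" for a h
  proof -
    have "\<forall>m x. ((\<lambda>x. (deriv ^^ m) \<psi> (a + x)) has_real_derivative (deriv ^^ Suc m) \<psi> (a + x)) (at x)"
      using DERIV_chain2[OF schwartz_has_real_derivative[OF assms] DERIV_add[OF DERIV_const DERIV_ident]]
      by simp
    from Maclaurin_all_le[where diff = "\<lambda>m x. (deriv ^^ m) \<psi> (a + x)" and x = h and n = n, OF _ this]
    obtain t where "\<psi> (a + h) = (\<Sum>m<n. (deriv ^^ m) \<psi> a / fact m * h ^ m)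
        + (deriv ^^ n) \<psi> (a + t) / fact n * h ^ n"
      by auto
    then have "\<bar>\<psi> (a + h) - (\<Sum>m<n. (deriv ^^ m) \<psi> a / fact m * h ^ m)\<bar>
        = \<bar>(deriv ^^ n) \<psi> (a + t)\<bar> / fact n * \<bar>h\<bar> ^ n"
      by (simp add: abs_mult power_abs)
    also have "\<dots> \<le> B / fact n * \<bar>h\<bar> ^ n"
      using B by (intro mult_right_mono divide_right_mono) auto
    finally show ?thesis .
  qed
  then show ?thesis by blast
qed

lemma
  fixes G r :: "real \<Rightarrow> real"
  assumes [measurable]: "G \<in> borel_measurable borel" "r \<in> borel_measurable borel"
    and moment: "integrable lborel (\<lambda>y. \<bar>y\<bar> ^ n * \<bar>G y\<bar>)"
    and r: "\<And>h. \<bar>r h\<bar> \<le> B * \<bar>h\<bar> ^ n" and "\<epsilon> > 0"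
  shows integrable_rescaled_remainder: "integrable lborel (\<lambda>y. G y * r (\<epsilon> * y))"
    and integral_rescaled_remainder_le:
      "\<bar>LBINT y. G y * r (\<epsilon> * y)\<bar> \<le> B * (LBINT y. \<bar>y\<bar> ^ n * \<bar>G y\<bar>) * \<epsilon> ^ n"
proof -
  have bound: "\<bar>G y * r (\<epsilon> * y)\<bar> \<le> B * \<epsilon> ^ n * (\<bar>y\<bar> ^ n * \<bar>G y\<bar>)" for y
    using mult_left_mono[OF r[of "\<epsilon> * y"] abs_ge_zero[of "G y"]] \<open>\<epsilon> > 0\<close>
    by (simp add: abs_mult power_mult_distrib mult_ac)
  show int: "integrable lborel (\<lambda>y. G y * r (\<epsilon> * y))"
    by (rule Bochner_Integration.integrable_bound[OF integrable_mult_right[OF moment]])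
       (use bound in \<open>auto intro!: AE_I2 order_trans[OF _ abs_ge_self]\<close>)
  have "\<bar>LBINT y. G y * r (\<epsilon> * y)\<bar> \<le> (LBINT y. B * \<epsilon> ^ n * (\<bar>y\<bar> ^ n * \<bar>G y\<bar>))"
    using int moment bound by (intro integral_abs_bound_integral) auto
  then show "\<bar>LBINT y. G y * r (\<epsilon> * y)\<bar> \<le> B * (LBINT y. \<bar>y\<bar> ^ n * \<bar>G y\<bar>) * \<epsilon> ^ n"
    by (subst (asm) integral_mult_right_zero) (simp add: mult_ac)
qed

lemma integral_rescaled_expansion:
  fixes G \<psi> :: "real \<Rightarrow> real"
  assumes G: "\<And>j. integrable lborel (\<lambda>y. y ^ j * G y)" and \<psi>: "schwartz \<psi>"
  shows "(\<lambda>\<epsilon>. (LBINT y. G y * \<psi> (a + \<epsilon> * y))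
      - (\<Sum>j<n. (deriv ^^ j) \<psi> a / fact j * (LBINT y. y ^ j * G y) * \<epsilon> ^ j))
    \<in> O[at_right 0](\<lambda>\<epsilon>. \<epsilon> ^ n)"
proof -
  define r where "r h = \<psi> (a + h) - (\<Sum>m<n. (deriv ^^ m) \<psi> a / fact m * h ^ m)" for h
  obtain B where B: "\<And>h. \<bar>r h\<bar> \<le> B * \<bar>h\<bar> ^ n"
    using schwartz_taylor_remainder[OF \<psi>] unfolding r_def by blast
  have G_meas: "G \<in> borel_measurable borel"
    using borel_measurable_integrable[OF G[of 0]] by simp
  have r_meas: "r \<in> borel_measurable borel"
    unfolding r_def using schwartz_continuous[OF \<psi>]
    by (intro borel_measurable_continuous_onI)
       (auto intro!: continuous_intros continuous_on_compose2[of UNIV \<psi>])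
  have moment: "integrable lborel (\<lambda>y. \<bar>y\<bar> ^ n * \<bar>G y\<bar>)"
    using integrable_abs[OF G[of n]] by (simp add: abs_mult power_abs)
  note remainder = integrable_rescaled_remainder[OF G_meas r_meas moment B]
    integral_rescaled_remainder_le[OF G_meas r_meas moment B]
  define K where "K = B * (LBINT y. \<bar>y\<bar> ^ n * \<bar>G y\<bar>)"
  have "\<bar>(LBINT y. G y * \<psi> (a + \<epsilon> * y))
      - (\<Sum>j<n. (deriv ^^ j) \<psi> a / fact j * (LBINT y. y ^ j * G y) * \<epsilon> ^ j)\<bar> \<le> K * \<epsilon> ^ n"
    if "\<epsilon> > 0" for \<epsilon>
  proof -
    have "G y * \<psi> (a + \<epsilon> * y) = G y * r (\<epsilon> * y)
        + (\<Sum>j<n. (deriv ^^ j) \<psi> a / fact j * \<epsilon> ^ j * (y ^ j * G y))" for y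
      by (simp add: r_def algebra_simps sum_distrib_left power_mult_distrib)
    then have "(LBINT y. G y * \<psi> (a + \<epsilon> * y)) = (LBINT y. G y * r (\<epsilon> * y)
        + (\<Sum>j<n. (deriv ^^ j) \<psi> a / fact j * \<epsilon> ^ j * (y ^ j * G y)))"
      by simp
    also have "\<dots> = (LBINT y. G y * r (\<epsilon> * y))
        + (\<Sum>j<n. (deriv ^^ j) \<psi> a / fact j * \<epsilon> ^ j * (LBINT y. y ^ j * G y))"
      using remainder(1)[OF that] G by (simp add: Bochner_Integration.integral_sum)
    finally have "(LBINT y. G y * \<psi> (a + \<epsilon> * y))
        - (\<Sum>j<n. (deriv ^^ j) \<psi> a / fact j * (LBINT y. y ^ j * G y) * \<epsilon> ^ j)
        = (LBINT y. G y * r (\<epsilon> * y))"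
      by (simp add: mult_ac)
    then show ?thesis using remainder(2)[OF that] by (simp add: K_def)
  qed
  then show ?thesis
    by (intro bigoI[of _ K] eventually_at_rightI[of 0 1]) auto
qed

lemma sum_powi_eq_sum_power:
  fixes c :: "nat \<Rightarrow> real" and \<epsilon> :: real
  assumes "\<And>j. int j < p \<Longrightarrow> c j = 0"
  shows "(\<Sum>k\<in>{p..<q}. (if 0 \<le> k then c (nat k) else 0) * \<epsilon> powi k) = (\<Sum>j<nat q. c j * \<epsilon> ^ j)"
proof -
  let ?\<xi> = "\<lambda>k. (if 0 \<le> k then c (nat k) else 0) * \<epsilon> powi k"
  have "(\<Sum>j<nat q. c j * \<epsilon> ^ j) = (\<Sum>k\<in>{0..<q}. ?\<xi> k)"
    by (rule sum.reindex_bij_witness[of _ nat int]) auto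
  also have "\<dots> = (\<Sum>k\<in>{p..<q}. ?\<xi> k)"
    using assms by (subst sum.same_carrier[where C = "{min p 0..<q}"]) auto
  finally show ?thesis by simp
qed

lemma zero_up_to_if_power_expansion:
  fixes c :: "nat \<Rightarrow> real"
  assumes F: "\<And>n. (\<lambda>\<epsilon>. F \<epsilon> - (\<Sum>j<n. c j * \<epsilon> ^ j)) \<in> O[at_right 0](\<lambda>\<epsilon>. \<epsilon> ^ n)"
    and c: "\<And>j. int j < p \<Longrightarrow> c j = 0"
  shows "zero_up_to p F"
  unfolding zero_up_to_def expands_as_def
proof (intro exI allI)
  fix n :: nat
  define m where "m = nat (p + int n)"
  have "(\<lambda>\<epsilon>::real. \<epsilon> ^ m) \<in> O[at_right 0](\<lambda>\<epsilon>. \<epsilon> powi (p + int n))"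
  proof (intro bigoI[of _ 1] eventually_at_rightI[of 0 1])
    fix \<epsilon> :: real assume "\<epsilon> \<in> {0<..<1}"
    moreover have "p + int n \<le> int m" by (simp add: m_def)
    ultimately show "norm (\<epsilon> ^ m) \<le> 1 * norm (\<epsilon> powi (p + int n))"
      using power_int_decreasing[of "p + int n" "int m" \<epsilon>] by (simp add: power_int_of_nat)
  qed simp
  with F[of m] have expansion: "(\<lambda>\<epsilon>. F \<epsilon> - (\<Sum>j<m. c j * \<epsilon> ^ j)) \<in> O[at_right 0](\<lambda>\<epsilon>. \<epsilon> powi (p + int n))"
    by (rule landau_o.big_trans)
  have sum_eq: "(\<Sum>k\<in>{p..<p + int n}. (if 0 \<le> k then c (nat k) else 0) * \<epsilon> powi k)
      = (\<Sum>j<m. c j * \<epsilon> ^ j)" for \<epsilon> :: real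
    unfolding m_def by (rule sum_powi_eq_sum_power[OF c])
  show "(\<lambda>\<epsilon>. F \<epsilon> - (\<Sum>k\<in>{p..<p + int n}. (if 0 \<le> k then c (nat k) else 0) * \<epsilon> powi k))
      \<in> O[at_right 0](\<lambda>\<epsilon>. \<epsilon> powi (p + int n))"
    unfolding sum_eq by (rule expansion)
qed

lemma zero_up_to_if_moments_vanish:
  fixes G \<psi> :: "real \<Rightarrow> real"
  assumes G: "\<And>j. integrable lborel (\<lambda>y. y ^ j * G y)" and \<psi>: "schwartz \<psi>"
    and vanish: "\<And>j. int j < p \<Longrightarrow> (LBINT y. y ^ j * G y) = 0"
    and R: "\<And>\<epsilon> x. \<epsilon> > 0 \<Longrightarrow> R \<epsilon> x = G ((x - a) / \<epsilon>) / \<epsilon>"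
  shows "zero_up_to p (\<lambda>\<epsilon>. LBINT x. R \<epsilon> x * \<psi> x)"
proof (rule zero_up_to_if_power_expansion)
  fix n
  have "(LBINT x. R \<epsilon> x * \<psi> x) = (LBINT y. G y * \<psi> (a + \<epsilon> * y))" if "\<epsilon> > 0" for \<epsilon>
    using lborel_integral_real_affine[of \<epsilon> "\<lambda>x. R \<epsilon> x * \<psi> x" a] that by (simp add: R)
  then have ev: "\<forall>\<^sub>F \<epsilon> in at_right 0. (LBINT y. G y * \<psi> (a + \<epsilon> * y))
      - (\<Sum>j<n. (deriv ^^ j) \<psi> a / fact j * (LBINT y. y ^ j * G y) * \<epsilon> ^ j)
    = (LBINT x. R \<epsilon> x * \<psi> x)
      - (\<Sum>j<n. (deriv ^^ j) \<psi> a / fact j * (LBINT y. y ^ j * G y) * \<epsilon> ^ j)"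
    by (intro eventually_at_rightI[of 0 1]) auto
  show "(\<lambda>\<epsilon>. (LBINT x. R \<epsilon> x * \<psi> x)
      - (\<Sum>j<n. (deriv ^^ j) \<psi> a / fact j * (LBINT y. y ^ j * G y) * \<epsilon> ^ j))
    \<in> O[at_right 0](\<lambda>\<epsilon>. \<epsilon> ^ n)"
    using integral_rescaled_expansion[OF G \<psi>, of a n] landau_o.big.in_cong[OF ev] by blast
qed (use vanish in simp)

section \<open>The travelling-wave residuals\<close>

lemma
  assumes "continuous_on UNIV F" and "integrable lborel F" and "\<epsilon> \<noteq> 0"
  shows deriv_wave_time: "deriv (\<lambda>s. wave c d v F s x \<epsilon>) t = - v * d * F ((x - v * t) / \<epsilon>) / \<epsilon>"
    and deriv_wave_space: "deriv (\<lambda>y. wave c d v F t y \<epsilon>) x = d * F ((x - v * t) / \<epsilon>) / \<epsilon>"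
proof -
  note P = primitive_has_real_derivative[OF assms(1,2)]
  have "((\<lambda>s. c + d * primitive F ((x - v * s) / \<epsilon>)) has_real_derivative
      d * (F ((x - v * t) / \<epsilon>) * (- v / \<epsilon>))) (at t)"
    using assms(3) by (auto intro!: derivative_eq_intros DERIV_chain2[OF P] simp: field_simps)
  then show "deriv (\<lambda>s. wave c d v F s x \<epsilon>) t = - v * d * F ((x - v * t) / \<epsilon>) / \<epsilon>"
    unfolding wave_def by (intro DERIV_imp_deriv) (simp add: field_simps)
  have "((\<lambda>y. c + d * primitive F ((y - v * t) / \<epsilon>)) has_real_derivative
      d * (F ((x - v * t) / \<epsilon>) * (1 / \<epsilon>))) (at x)"
    using assms(3) by (auto intro!: derivative_eq_intros DERIV_chain2[OF P] simp: field_simps)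
  then show "deriv (\<lambda>y. wave c d v F t y \<epsilon>) x = d * F ((x - v * t) / \<epsilon>) / \<epsilon>"
    unfolding wave_def by (intro DERIV_imp_deriv) (simp add: field_simps)
qed

lemma
  assumes "sech2_span F" and "\<epsilon> \<noteq> 0"
  shows sech2_span_deriv_wave_time:
      "deriv (\<lambda>s. wave c d v F s x \<epsilon>) t = - v * d * F ((x - v * t) / \<epsilon>) / \<epsilon>"
    and sech2_span_deriv_wave_space:
      "deriv (\<lambda>y. wave c d v F t y \<epsilon>) x = d * F ((x - v * t) / \<epsilon>) / \<epsilon>"
  using deriv_wave_time deriv_wave_space
    sech2_span_continuous[OF assms(1)] sech2_span_integrable[OF assms(1)] assms(2)
  by auto

lemma wave_kink_eq: "wave u0 1 v kink' t x \<epsilon> = u0 + kink ((x - v * t) / \<epsilon>)"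
  by (simp add: wave_def primitive_kink')

lemma momentum_residual:
  fixes u0 v \<sigma>0 x t \<epsilon> :: real
  assumes St: "sech2_span St" and \<epsilon>: "\<epsilon> \<noteq> 0" and "v = 2 * u0"
  defines "u \<equiv> wave u0 1 v kink'" and "\<sigma> \<equiv> wave \<sigma>0 1 v St" and "\<xi> \<equiv> (x - v * t) / \<epsilon>"
  shows "deriv (\<lambda>s. u s x \<epsilon>) t + 2 * u t x \<epsilon> * deriv (\<lambda>y. u t y \<epsilon>) x - deriv (\<lambda>y. \<sigma> t y \<epsilon>) x
    = (2 * kink \<xi> * kink' \<xi> - St \<xi>) / \<epsilon>"
  using \<epsilon> \<open>v = 2 * u0\<close> unfolding u_def \<sigma>_def \<xi>_def
    sech2_span_deriv_wave_time[OF sech2_span_kink' \<epsilon>] sech2_span_deriv_wave_space[OF sech2_span_kink' \<epsilon>]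
    sech2_span_deriv_wave_space[OF St \<epsilon>]
  by (simp add: wave_kink_eq field_simps)

lemma stress_residual:
  fixes u0 v \<sigma>0 c x t \<epsilon> :: real
  assumes St: "sech2_span St" and \<epsilon>: "\<epsilon> \<noteq> 0"
  defines "u \<equiv> wave u0 1 v kink'" and "\<sigma> \<equiv> wave \<sigma>0 1 v St" and "\<xi> \<equiv> (x - v * t) / \<epsilon>"
  shows "deriv (\<lambda>s. \<sigma> s x \<epsilon>) t + u t x \<epsilon> * deriv (\<lambda>y. \<sigma> t y \<epsilon>) x - c * deriv (\<lambda>y. u t y \<epsilon>) x
    = ((u0 - v) * St \<xi> + kink \<xi> * St \<xi> - c * kink' \<xi>) / \<epsilon>"
  using \<epsilon> unfolding u_def \<sigma>_def \<xi>_def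
    sech2_span_deriv_wave_space[OF sech2_span_kink' \<epsilon>]
    sech2_span_deriv_wave_time[OF St \<epsilon>] sech2_span_deriv_wave_space[OF St \<epsilon>]
  by (simp add: wave_kink_eq field_simps)

lemma weak_momentum_equation:
  assumes St: "sech2_span St" and \<psi>: "schwartz \<psi>" and "v = 2 * u0"
    and vanish: "\<And>j. int j < p \<Longrightarrow> (LBINT x. x ^ j * (2 * kink x * kink' x - St x)) = 0"
  shows "zero_up_to p (\<lambda>\<epsilon>. LBINT x.
    (deriv (\<lambda>s. wave u0 1 v kink' s x \<epsilon>) t + 2 * wave u0 1 v kink' t x \<epsilon> * deriv (\<lambda>y. wave u0 1 v kink' t y \<epsilon>) x
      - deriv (\<lambda>y. wave \<sigma>0 1 v St t y \<epsilon>) x) * \<psi> x)"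
proof (rule zero_up_to_if_moments_vanish[where a = "v * t", OF _ \<psi>])
  show "integrable lborel (\<lambda>y. y ^ j * (2 * kink y * kink' y - St y))" for j
    by (intro sech2_span_integrable_moment sech2_span_diff sech2_span_kink_kink' St)
qed (fact vanish, rule momentum_residual[OF St _ \<open>v = 2 * u0\<close>], simp)

lemma weak_stress_equation:
  assumes St: "sech2_span St" and \<psi>: "schwartz \<psi>"
    and vanish: "\<And>j. int j < p \<Longrightarrow>
      (LBINT x. x ^ j * ((u0 - v) * St x + kink x * St x - c * kink' x)) = 0"
  shows "zero_up_to p (\<lambda>\<epsilon>. LBINT x.
    (deriv (\<lambda>s. wave \<sigma>0 1 v St s x \<epsilon>) t + wave u0 1 v kink' t x \<epsilon> * deriv (\<lambda>y. wave \<sigma>0 1 v St t y \<epsilon>) x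
      - c * deriv (\<lambda>y. wave u0 1 v kink' t y \<epsilon>) x) * \<psi> x)"
proof (rule zero_up_to_if_moments_vanish[where a = "v * t", OF _ \<psi>])
  show "integrable lborel (\<lambda>y. y ^ j * ((u0 - v) * St y + kink y * St y - c * kink' y))" for j
    by (intro sech2_span_integrable_moment sech2_span_diff sech2_span.add sech2_span_cmult
        sech2_span_mult_kink sech2_span_kink' St)
qed (fact vanish, rule stress_residual[OF St], simp)

theorem theorem4:
  fixes T k :: real and p :: int
  assumes "T > 0"
  shows "\<exists>u0 du \<sigma>0 d\<sigma> v Ut St.
     du \<noteq> 0 \<and> d\<sigma> \<noteq> 0 \<and> schwartz Ut \<and> schwartz St \<and>
     (LBINT y. Ut y) = 1 \<and> (LBINT y. St y) = 1 \<and>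
     (let u = wave u0 du v Ut; \<sigma> = wave \<sigma>0 d\<sigma> v St in
      \<forall>t\<in>{0..T}. \<forall>\<psi>. schwartz \<psi> \<longrightarrow>
        zero_up_to p (\<lambda>\<epsilon>. LBINT x.
           (deriv (\<lambda>s. u s x \<epsilon>) t + 2 * u t x \<epsilon> * deriv (\<lambda>y. u t y \<epsilon>) x
             - deriv (\<lambda>y. \<sigma> t y \<epsilon>) x) * \<psi> x) \<and>
        zero_up_to p (\<lambda>\<epsilon>. LBINT x.
           (deriv (\<lambda>s. \<sigma> s x \<epsilon>) t + u t x \<epsilon> * deriv (\<lambda>y. \<sigma> t y \<epsilon>) x
             - k\<^sup>2 * deriv (\<lambda>y. u t y \<epsilon>) x) * \<psi> x)) \<and>
     v = 2 * u0 + du - d\<sigma> / du \<and>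
     d\<sigma>\<^sup>2 - (u0 + du / 2) * du * d\<sigma> - k\<^sup>2 * du\<^sup>2 = 0"
proof -
  \<comment> \<open>The construction works for every t.\<close>
  define u0 v where "u0 = 1/2 - k\<^sup>2" and "v = 1 - 2 * k\<^sup>2"
  obtain St where St: "sech2_span St"
    and m1: "\<forall>j<Suc (nat p). (LBINT x. x ^ j * (2 * kink x * kink' x - St x)) = 0"
    and m2: "\<forall>j<Suc (nat p). (LBINT x. x ^ j * ((u0 - v) * St x + kink x * St x - k\<^sup>2 * kink' x)) = 0"
    using exists_stress_profile[OF sech2_span_kink_kink' sech2_span_cmult[OF sech2_span_kink']] by blast
  have "(LBINT x. St x) = 1"
    using m1[rule_format, of 0] integral_kink_kink' sech2_span_integrable[OF sech2_span_kink_kink']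
      sech2_span_integrable[OF St] by (simp add: Bochner_Integration.integral_diff)
  moreover have "v = 2 * u0" and "v = 2 * u0 + 1 - 1 / 1"
    and "1\<^sup>2 - (u0 + 1 / 2) * 1 * 1 - k\<^sup>2 * 1\<^sup>2 = (0::real)"
    by (simp_all add: u0_def v_def)
  moreover have "\<And>j. int j < p \<Longrightarrow> j < Suc (nat p)" by simp
  ultimately show ?thesis
    unfolding Let_def
    by (intro exI[of _ u0] exI[of _ 1] exI[of _ 0] exI[of _ 1] exI[of _ v] exI[of _ kink'] exI[of _ St]
        conjI ballI allI impI one_neq_zero sech2_span_schwartz[OF St] sech2_span_schwartz[OF sech2_span_kink']
        integral_kink' weak_momentum_equation[OF St] weak_stress_equation[OF St] m1[rule_format] m2[rule_format])
qed

end
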